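(* Let $n\ge2$, $\nu_1,\ldots,\nu_n>0$, and $(j_1,\ldots,j_{n-1})$ nonnegative integers. Then \[ \psi^{BG}_{j_1,\ldots,j_{n-1}}=\prod_{k=1}^{n-1}(-1)^{j_k}\,j_k!\,\frac{\Gamma(2\nu_{k+1})}{\Gamma(2\nu_{k+1}+j_k)}\Big(L_+^{[k+1]}\Big)^{j_k}P^{(\alpha_k,\beta_k)}_{j_k}\!\left(\frac{x_{k+1}-L_+^{[k]}}{L_+^{[k+1]}}\right), \] where $\alpha_k=2\sum_{i=1}^k\nu_i-1+2\sum_{\ell=1}^{k-1}j_\ell$ and $\beta_k=2\nu_{k+1}-1$ (each factor being a polynomial).
   Context: $L_+^{[m]}=\sum_{i=1}^m x_i$ and $L_-^{[m]}=\sum_{i=1}^m\big(x_i\partial_{x_i}^2+2\nu_i\partial_{x_i}\big)$. For $2\le m\le n$ and a homogeneous polynomial $p$ of degree $d$ in $x_1,\ldots,x_{m-1}$, $CK_m^{BG}(p)=\Gamma(2\nu_m)\sum_{j=0}^d\frac{(-x_mL_-^{[m-1]})^j}{j!\,\Gamma(j+2\nu_m)}p$. Define $\psi^{BG}_{j_1,\ldots,j_{n-1}}=CK_n^{BG}\big((L_+^{[n-1]})^{j_{n-1}}CK_{n-1}^{BG}(\cdots(L_+^{[2]})^{j_2}CK_2^{BG}(x_1^{j_1})\cdots)\big)$. The Jacobi polynomial is $P_m^{(\alpha,\beta)}(x)=\sum_{s=0}^m\binom{m+\alpha}{s}\binom{m+\beta}{m-s}\left(\frac{x-1}{2}\right)^{m-s}\left(\frac{x+1}{2}\right)^s$.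 *)

theory Defs
  imports "HOL-Analysis.Analysis"
begin

text \<open>Polynomials in the variables x_1, x_2, ... are represented as real functions of
  a point x :: nat => real (coordinate i is x i). Partial derivative in coordinate i:\<close>

definition pd :: "nat \<Rightarrow> ((nat \<Rightarrow> real) \<Rightarrow> real) \<Rightarrow> (nat \<Rightarrow> real) \<Rightarrow> real" where
  "pd i f = (\<lambda>x. deriv (\<lambda>t. f (x(i := t))) (x i))"

definition Lplus :: "nat \<Rightarrow> (nat \<Rightarrow> real) \<Rightarrow> real" where
  "Lplus m x = (\<Sum>i=1..m. x i)"

definition Lminus :: "(nat \<Rightarrow> real) \<Rightarrow> nat \<Rightarrow> ((nat \<Rightarrow> real) \<Rightarrow> real) \<Rightarrow> (nat \<Rightarrow> real) \<Rightarrow> real" where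
  "Lminus \<nu> m f = (\<lambda>x. \<Sum>i=1..m. x i * pd i (pd i f) x + 2 * \<nu> i * pd i f x)"

text \<open>CK_m^{BG}(p) for p homogeneous of degree d in x_1..x_{m-1}; the degree d is passed
  explicitly.\<close>
definition CK :: "(nat \<Rightarrow> real) \<Rightarrow> nat \<Rightarrow> nat \<Rightarrow> ((nat \<Rightarrow> real) \<Rightarrow> real) \<Rightarrow> (nat \<Rightarrow> real) \<Rightarrow> real" where
  "CK \<nu> m d p = (\<lambda>x. Gamma (2 * \<nu> m) *
     (\<Sum>j=0..d. ((\<lambda>f y. - y m * Lminus \<nu> (m - 1) f y) ^^ j) p x
                  / (fact j * Gamma (real j + 2 * \<nu> m))))"

text \<open>G k = CK_{k+1}((L_+^{[k]})^{j_k} CK_k( ... (L_+^{[2]})^{j_2} CK_2((L_+^{[1]})^{j_1}) ...)),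
  noting (L_+^{[1]})^{j_1} = x_1^{j_1}. The argument of CK_{k+2} in the successor step is
  homogeneous of degree j_1 + ... + j_{k+1}.\<close>
fun psiAux :: "(nat \<Rightarrow> real) \<Rightarrow> (nat \<Rightarrow> nat) \<Rightarrow> nat \<Rightarrow> (nat \<Rightarrow> real) \<Rightarrow> real" where
  "psiAux \<nu> j 0 = (\<lambda>x. 1)"
| "psiAux \<nu> j (Suc k) =
     CK \<nu> (k + 2) (\<Sum>l=1..k+1. j l) (\<lambda>x. Lplus (k + 1) x ^ j (k + 1) * psiAux \<nu> j k x)"

definition psiBG :: "(nat \<Rightarrow> real) \<Rightarrow> (nat \<Rightarrow> nat) \<Rightarrow> nat \<Rightarrow> (nat \<Rightarrow> real) \<Rightarrow> real" where
  "psiBG \<nu> j n = psiAux \<nu> j (n - 1)"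

definition jacobiP :: "nat \<Rightarrow> real \<Rightarrow> real \<Rightarrow> real \<Rightarrow> real" where
  "jacobiP m a b x = (\<Sum>s=0..m. ((real m + a) gchoose s) * ((real m + b) gchoose (m - s))
       * ((x - 1) / 2) ^ (m - s) * ((x + 1) / 2) ^ s)"

definition jacobiHom :: "nat \<Rightarrow> real \<Rightarrow> real \<Rightarrow> real \<Rightarrow> real \<Rightarrow> real" where
  "jacobiHom m a b u v = (\<Sum>s=0..m. ((real m + a) gchoose s) * ((real m + b) gchoose (m - s))
       * ((u - v) / 2) ^ (m - s) * ((u + v) / 2) ^ s)"

lemma jacobiHom_eq: "v \<noteq> 0 \<Longrightarrow> jacobiHom m a b u v = v ^ m * jacobiP m a b (u / v)"
proof -
  assume v: "v \<noteq> 0"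
  have "((u - v) / 2) ^ (m - s) * ((u + v) / 2) ^ s
        = v ^ m * (((u / v - 1) / 2) ^ (m - s) * ((u / v + 1) / 2) ^ s)" if "s \<le> m" for s
  proof -
    have "u - v = v * (u / v - 1)" "u + v = v * (u / v + 1)" using v by (auto simp: field_simps)
    hence "((u - v) / 2) ^ (m - s) * ((u + v) / 2) ^ s
         = v ^ (m - s) * v ^ s * (((u / v - 1) / 2) ^ (m - s) * ((u / v + 1) / 2) ^ s)"
      by (simp only: times_divide_eq_right[symmetric] power_mult_distrib mult_ac)
    also have "v ^ (m - s) * v ^ s = v ^ m" using that by (simp add: power_add[symmetric])
    finally show ?thesis .
  qed
  thus ?thesis unfolding jacobiHom_def jacobiP_def
    by (simp add: sum_distrib_left mult_ac)
qed

definition alphaBG :: "(nat \<Rightarrow> real) \<Rightarrow> (nat \<Rightarrow> nat) \<Rightarrow> nat \<Rightarrow> real" where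
  "alphaBG \<nu> j k = 2 * (\<Sum>i=1..k. \<nu> i) - 1 + 2 * (\<Sum>l=1..k-1. real (j l))"

end

(*
  Write H for the function obtained after k steps of the recursion. By induction, H is a
  polynomial in x_1, ..., x_(k+1), homogeneous of degree D = j_1 + ... + j_k, killed by
  L_-^[k+1], and independent of the later coordinates. For such an H, with m = k + 1, the
  product rule gives L_-^[m] ((L_+^[m])^b H) = b (b - 1 + gamma) (L_+^[m])^(b-1) H with
  gamma = 2 (nu_1 + ... + nu_m) + 2 D, so every iterate of L_-^[m] on (L_+^[m])^a H is an
  explicit multiple of a lower power of L_+^[m] times H. The CK series therefore collapses to
  H times a finite sum in x_(m+1) and L_+^[m], which after a binomial/Pochhammer computation is
  the homogenised Jacobi polynomial with parameters (gamma - 1, 2 nu_(m+1) - 1). The invariant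
  survives the step because the x_(m+1)-part x d^2 + 2 nu d of L_-^[m+1] lowers the power of
  x_(m+1) in the CK series, and with the CK coefficients this makes L_-^[m+1] of the series
  telescope to 0.
*)

theory Submission
  imports Defs
begin

section \<open>Polynomial functions and their partial derivatives\<close>

inductive poly_fun :: "((nat \<Rightarrow> real) \<Rightarrow> real) \<Rightarrow> bool" where
  poly_fun_const: "poly_fun (\<lambda>x. c)"
| poly_fun_var: "poly_fun (\<lambda>x. x i)"
| poly_fun_add: "poly_fun f \<Longrightarrow> poly_fun g \<Longrightarrow> poly_fun (\<lambda>x. f x + g x)"
| poly_fun_mult: "poly_fun f \<Longrightarrow> poly_fun g \<Longrightarrow> poly_fun (\<lambda>x. f x * g x)"

lemma pd_eqI:
  assumes "\<And>x. ((\<lambda>t. f (x(i := t))) has_real_derivative g x) (at (x i))"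
  shows "pd i f = g"
  unfolding pd_def using assms by (intro ext) (simp add: DERIV_imp_deriv)

lemma pd_const: "pd i (\<lambda>x. c) = (\<lambda>x. 0)"
  by (rule pd_eqI) simp

lemma pd_var: "pd i (\<lambda>x. x k) = (\<lambda>x. if k = i then 1 else 0)"
  by (rule pd_eqI) auto

lemma poly_fun_has_pd:
  assumes "poly_fun f"
  shows "poly_fun (pd i f) \<and> (\<forall>x. ((\<lambda>t. f (x(i := t))) has_real_derivative pd i f x) (at (x i)))"
  using assms
proof induction
  case (poly_fun_const c)
  then show ?case by (simp add: pd_const poly_fun.poly_fun_const)
next
  case (poly_fun_var k)
  then show ?case by (auto simp: pd_var intro: poly_fun.intros)
next
  case (poly_fun_add f g)
  have "((\<lambda>t. f (x(i := t)) + g (x(i := t))) has_real_derivative pd i f x + pd i g x) (at (x i))" for x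
    using poly_fun_add.IH by (intro DERIV_add) blast+
  moreover from this have "pd i (\<lambda>x. f x + g x) = (\<lambda>x. pd i f x + pd i g x)" by (rule pd_eqI)
  ultimately show ?case using poly_fun_add.IH by (metis poly_fun.poly_fun_add)
next
  case (poly_fun_mult f g)
  have "((\<lambda>t. f (x(i := t)) * g (x(i := t))) has_real_derivative
      pd i f x * g (x(i := x i)) + pd i g x * f (x(i := x i))) (at (x i))" for x
    using poly_fun_mult.IH by (intro DERIV_mult) blast+
  then have "((\<lambda>t. f (x(i := t)) * g (x(i := t))) has_real_derivative pd i f x * g x + f x * pd i g x) (at (x i))" for x
    by (simp add: mult.commute)
  moreover from this have "pd i (\<lambda>x. f x * g x) = (\<lambda>x. pd i f x * g x + f x * pd i g x)" by (rule pd_eqI)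
  ultimately show ?case using poly_fun_mult by (metis poly_fun.poly_fun_add poly_fun.poly_fun_mult)
qed

lemma poly_fun_pd: "poly_fun f \<Longrightarrow> poly_fun (pd i f)"
  using poly_fun_has_pd by blast

lemma pd_has_real_derivative:
  "poly_fun f \<Longrightarrow> ((\<lambda>t. f (x(i := t))) has_real_derivative pd i f x) (at (x i))"
  using poly_fun_has_pd by blast

lemma poly_fun_cmult: "poly_fun f \<Longrightarrow> poly_fun (\<lambda>x. c * f x)"
  by (rule poly_fun_mult[OF poly_fun_const])

lemma poly_fun_pow: "poly_fun f \<Longrightarrow> poly_fun (\<lambda>x. f x ^ n)"
  by (induction n) (simp_all add: poly_fun_const poly_fun_mult)

lemma poly_fun_sum:
  "finite A \<Longrightarrow> (\<And>a. a \<in> A \<Longrightarrow> poly_fun (f a)) \<Longrightarrow> poly_fun (\<lambda>x. \<Sum>a\<in>A. f a x)"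
  by (induction A rule: finite_induct) (simp_all add: poly_fun_const poly_fun_add)

lemma poly_fun_Lplus: "poly_fun (Lplus m)"
  unfolding Lplus_def[abs_def] by (intro poly_fun_sum poly_fun_var) auto

lemma poly_fun_Lminus: "poly_fun f \<Longrightarrow> poly_fun (Lminus \<nu> m f)"
  unfolding Lminus_def by (intro poly_fun_sum poly_fun_add poly_fun_mult poly_fun_var poly_fun_const poly_fun_pd) auto

lemma pd_add: "poly_fun f \<Longrightarrow> poly_fun g \<Longrightarrow> pd i (\<lambda>x. f x + g x) = (\<lambda>x. pd i f x + pd i g x)"
  by (rule pd_eqI) (intro DERIV_add pd_has_real_derivative)

lemma pd_mult:
  assumes "poly_fun f" "poly_fun g"
  shows "pd i (\<lambda>x. f x * g x) = (\<lambda>x. pd i f x * g x + f x * pd i g x)"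
proof (rule pd_eqI)
  fix x
  have "((\<lambda>t. f (x(i := t)) * g (x(i := t))) has_real_derivative
      pd i f x * g (x(i := x i)) + pd i g x * f (x(i := x i))) (at (x i))"
    using assms by (intro DERIV_mult pd_has_real_derivative)
  then show "((\<lambda>t. f (x(i := t)) * g (x(i := t))) has_real_derivative pd i f x * g x + f x * pd i g x) (at (x i))"
    by (simp add: mult.commute)
qed

lemma pd_cmult: "poly_fun f \<Longrightarrow> pd i (\<lambda>x. c * f x) = (\<lambda>x. c * pd i f x)"
  by (simp add: pd_mult poly_fun_const pd_const)

lemma pd_pow:
  assumes "poly_fun f"
  shows "pd i (\<lambda>x. f x ^ n) = (\<lambda>x. real n * f x ^ (n - 1) * pd i f x)"
proof (rule pd_eqI)
  fix x
  show "((\<lambda>t. f (x(i := t)) ^ n) has_real_derivative real n * f x ^ (n - 1) * pd i f x) (at (x i))"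
    using DERIV_power[OF pd_has_real_derivative[OF assms], of x i n] by (simp add: mult_ac)
qed

lemma pd_sum:
  "finite A \<Longrightarrow> (\<And>a. a \<in> A \<Longrightarrow> poly_fun (f a)) \<Longrightarrow>
   pd i (\<lambda>x. \<Sum>a\<in>A. f a x) = (\<lambda>x. \<Sum>a\<in>A. pd i (f a) x)"
proof (induction A rule: finite_induct)
  case (insert a A)
  then show ?case using pd_add[of "f a" "\<lambda>x. \<Sum>a\<in>A. f a x" i] poly_fun_sum[of A f] by simp
qed (simp add: pd_const)

lemma pd_Lplus: "pd i (Lplus m) = (\<lambda>x. if i \<in> {1..m} then 1 else 0)"
proof -
  have "pd i (Lplus m) = (\<lambda>x. \<Sum>l\<in>{1..m}. pd i (\<lambda>x. x l) x)"
    unfolding Lplus_def[abs_def] by (rule pd_sum) (auto intro: poly_fun_var)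
  then show ?thesis by (simp add: pd_var)
qed

definition coord_indep :: "nat \<Rightarrow> ((nat \<Rightarrow> real) \<Rightarrow> real) \<Rightarrow> bool" where
  "coord_indep k f \<longleftrightarrow> (\<forall>x t. f (x(k := t)) = f x)"

lemma pd_eq_0_if_coord_indep: "coord_indep k f \<Longrightarrow> pd k f = (\<lambda>x. 0)"
  unfolding coord_indep_def by (rule pd_eqI) simp

lemma coord_indep_pd:
  assumes "coord_indep k f"
  shows "coord_indep k (pd i f)"
proof (cases "i = k")
  case True
  then show ?thesis using pd_eq_0_if_coord_indep[OF assms] by (simp add: coord_indep_def)
next
  case False
  have "f (x(k := t, i := s)) = f (x(i := s))" for x t s
    using assms False unfolding coord_indep_def by (metis fun_upd_twist)
  then show ?thesis using False unfolding coord_indep_def pd_def by simp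
qed

lemma coord_indep_Lminus:
  assumes "coord_indep k f" "k \<notin> {1..m}"
  shows "coord_indep k (Lminus \<nu> m f)"
  unfolding coord_indep_def
proof (intro allI)
  fix x t
  have "pd i f (x(k := t)) = pd i f x" "pd i (pd i f) (x(k := t)) = pd i (pd i f) x" for i
    using coord_indep_pd[OF assms(1)] coord_indep_pd[OF coord_indep_pd[OF assms(1)]] unfolding coord_indep_def by blast+
  moreover have "(x(k := t)) i = x i" if "i \<in> {1..m}" for i
    using that assms(2) by auto
  ultimately show "Lminus \<nu> m f (x(k := t)) = Lminus \<nu> m f x"
    unfolding Lminus_def by (intro sum.cong) auto
qed

lemma coord_indep_Lplus: "m < k \<Longrightarrow> coord_indep k (Lplus m)"
  unfolding coord_indep_def Lplus_def by auto

lemma coord_indep_Lplus_pow_mult: "coord_indep k H \<Longrightarrow> m < k \<Longrightarrow> coord_indep k (\<lambda>x. Lplus m x ^ a * H x)"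
  using coord_indep_Lplus[of m k] by (simp add: coord_indep_def)

section \<open>Homogeneity and the operator \<open>L_-\<close>\<close>

(* Euler's identity is the only form in which homogeneity is used. *)
definition homogeneous :: "nat \<Rightarrow> real \<Rightarrow> ((nat \<Rightarrow> real) \<Rightarrow> real) \<Rightarrow> bool" where
  "homogeneous m D f \<longleftrightarrow> poly_fun f \<and> (\<forall>x. (\<Sum>i=1..m. x i * pd i f x) = D * f x)"

lemma homogeneous_const: "homogeneous m 0 (\<lambda>x. c)"
  by (simp add: homogeneous_def pd_const poly_fun_const)

lemma homogeneous_var: "k \<in> {1..m} \<Longrightarrow> homogeneous m 1 (\<lambda>x. x k)"
  by (simp add: homogeneous_def pd_var poly_fun_var if_distrib sum.delta' cong: if_cong)

lemma homogeneous_add: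
  "homogeneous m D f \<Longrightarrow> homogeneous m D g \<Longrightarrow> homogeneous m D (\<lambda>x. f x + g x)"
  by (simp add: homogeneous_def pd_add poly_fun_add distrib_left sum.distrib)

lemma homogeneous_mult:
  assumes "homogeneous m D f" "homogeneous m E g"
  shows "homogeneous m (D + E) (\<lambda>x. f x * g x)"
proof -
  have "(\<Sum>i=1..m. x i * (pd i f x * g x + f x * pd i g x))
      = (\<Sum>i=1..m. x i * pd i f x) * g x + f x * (\<Sum>i=1..m. x i * pd i g x)" for x
    by (simp add: sum_distrib_left sum_distrib_right sum.distrib algebra_simps)
  then show ?thesis
    using assms by (simp add: homogeneous_def pd_mult poly_fun_mult algebra_simps)
qed

lemma homogeneous_cmult: "homogeneous m D f \<Longrightarrow> homogeneous m D (\<lambda>x. c * f x)"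
  using homogeneous_mult[OF homogeneous_const] by fastforce

lemma homogeneous_diff:
  "homogeneous m D f \<Longrightarrow> homogeneous m D g \<Longrightarrow> homogeneous m D (\<lambda>x. f x - g x)"
  using homogeneous_add[OF _ homogeneous_cmult, of m D f g "-1"] by simp

lemma homogeneous_pow: "homogeneous m D f \<Longrightarrow> homogeneous m (real n * D) (\<lambda>x. f x ^ n)"
proof (induction n)
  case 0
  then show ?case using homogeneous_const[of m 1] by simp
next
  case (Suc n)
  then show ?case using homogeneous_mult[of m D f "real n * D" "\<lambda>x. f x ^ n"]
    by (simp add: algebra_simps)
qed

lemma homogeneous_sum:
  "finite A \<Longrightarrow> (\<And>a. a \<in> A \<Longrightarrow> homogeneous m D (f a)) \<Longrightarrow> homogeneous m D (\<lambda>x. \<Sum>a\<in>A. f a x)"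
proof (induction A rule: finite_induct)
  case empty
  then show ?case by (simp add: homogeneous_def pd_const poly_fun_const)
next
  case (insert a A)
  then show ?case using homogeneous_add[of m D "f a" "\<lambda>x. \<Sum>a\<in>A. f a x"] by simp
qed

lemma homogeneous_Lplus: "homogeneous m 1 (Lplus m)"
  unfolding Lplus_def[abs_def] by (intro homogeneous_sum homogeneous_var) auto

lemma homogeneous_Suc: "homogeneous m D f \<Longrightarrow> coord_indep (Suc m) f \<Longrightarrow> homogeneous (Suc m) D f"
  by (simp add: homogeneous_def pd_eq_0_if_coord_indep)

lemma Lminus_cmult: "poly_fun f \<Longrightarrow> Lminus \<nu> m (\<lambda>x. c * f x) = (\<lambda>x. c * Lminus \<nu> m f x)"
  unfolding Lminus_def by (simp add: pd_cmult poly_fun_pd sum_distrib_left algebra_simps)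

lemma Lminus_add:
  "poly_fun f \<Longrightarrow> poly_fun g \<Longrightarrow> Lminus \<nu> m (\<lambda>x. f x + g x) = (\<lambda>x. Lminus \<nu> m f x + Lminus \<nu> m g x)"
  unfolding Lminus_def by (simp add: pd_add poly_fun_pd poly_fun_add sum.distrib[symmetric] algebra_simps)

lemma Lminus_sum:
  "finite A \<Longrightarrow> (\<And>a. a \<in> A \<Longrightarrow> poly_fun (f a)) \<Longrightarrow>
   Lminus \<nu> m (\<lambda>x. \<Sum>a\<in>A. f a x) = (\<lambda>x. \<Sum>a\<in>A. Lminus \<nu> m (f a) x)"
proof (induction A rule: finite_induct)
  case (insert a A)
  then show ?case using Lminus_add[of "f a" "\<lambda>x. \<Sum>a\<in>A. f a x" \<nu> m] poly_fun_sum[of A f] by simp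
qed (simp add: Lminus_def pd_const)

lemma Lminus_mult:
  assumes f: "poly_fun f" and g: "poly_fun g"
  shows "Lminus \<nu> m (\<lambda>x. f x * g x) =
    (\<lambda>x. f x * Lminus \<nu> m g x + g x * Lminus \<nu> m f x + 2 * (\<Sum>i=1..m. x i * pd i f x * pd i g x))"
proof -
  have "pd i (pd i (\<lambda>x. f x * g x)) =
      (\<lambda>x. pd i (pd i f) x * g x + 2 * (pd i f x * pd i g x) + f x * pd i (pd i g) x)" for i
    using f g by (simp add: pd_mult pd_add poly_fun_pd poly_fun_mult algebra_simps)
  then show ?thesis
    unfolding Lminus_def using f g
    by (simp add: pd_mult sum_distrib_left sum.distrib[symmetric] algebra_simps)
qed

lemma Lminus_mult_coord_indep:
  assumes "poly_fun q" "poly_fun g" "\<And>l. l \<in> {1..m} \<Longrightarrow> coord_indep l q"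
  shows "Lminus \<nu> m (\<lambda>x. q x * g x) = (\<lambda>x. q x * Lminus \<nu> m g x)"
proof -
  have pd_q: "pd l q = (\<lambda>x. 0)" if "l \<in> {1..m}" for l
    using pd_eq_0_if_coord_indep[OF assms(3)[OF that]] .
  have "Lminus \<nu> m q = (\<lambda>x. 0)"
    unfolding Lminus_def by (intro ext sum.neutral) (simp add: pd_q pd_const)
  moreover have "(\<Sum>i=1..m. x i * pd i q x * pd i g x) = 0" for x
    by (intro sum.neutral) (simp add: pd_q)
  ultimately show ?thesis
    unfolding Lminus_mult[OF assms(1,2)] by simp
qed

lemma Lminus_Suc:
  "Lminus \<nu> (Suc m) f =
    (\<lambda>x. Lminus \<nu> m f x + (x (Suc m) * pd (Suc m) (pd (Suc m) f) x + 2 * \<nu> (Suc m) * pd (Suc m) f x))"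
  unfolding Lminus_def by (simp add: sum.cl_ivl_Suc)

lemma real_mult_pow_pred_pred:
  "(y::real) * (real n * real (n - 1) * y ^ (n - 1 - 1)) = real n * (real n - 1) * y ^ (n - 1)"
proof (cases "n \<ge> 2")
  case True
  then obtain c where "n = Suc (Suc c)"
    by (metis add_2_eq_Suc le_Suc_ex)
  then show ?thesis by (simp add: algebra_simps)
next
  case False
  then have "n = 0 \<or> n = 1" by auto
  then show ?thesis by auto
qed

lemma Lminus_Lplus_pow:
  "Lminus \<nu> m (\<lambda>x. Lplus m x ^ b) = (\<lambda>x. real b * (real b - 1 + 2 * (\<Sum>i=1..m. \<nu> i)) * Lplus m x ^ (b - 1))"
proof
  fix x
  let ?L = "Lplus m x"
  have pd1: "pd i (\<lambda>x. Lplus m x ^ b) = (\<lambda>x. real b * Lplus m x ^ (b - 1))"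
    and pd2: "pd i (\<lambda>x. real b * Lplus m x ^ (b - 1)) = (\<lambda>x. real b * (real (b - 1) * Lplus m x ^ (b - 1 - 1)))"
    if "i \<in> {1..m}" for i
    using that by (simp_all add: pd_pow pd_cmult poly_fun_pow poly_fun_Lplus pd_Lplus)
  have "Lminus \<nu> m (\<lambda>x. Lplus m x ^ b) x
      = (\<Sum>i=1..m. x i * (real b * (real (b - 1) * ?L ^ (b - 1 - 1))) + 2 * \<nu> i * (real b * ?L ^ (b - 1)))"
    unfolding Lminus_def
  proof (intro sum.cong refl)
    fix i assume i: "i \<in> {1..m}"
    show "x i * pd i (pd i (\<lambda>x. Lplus m x ^ b)) x + 2 * \<nu> i * pd i (\<lambda>x. Lplus m x ^ b) x
        = x i * (real b * (real (b - 1) * ?L ^ (b - 1 - 1))) + 2 * \<nu> i * (real b * ?L ^ (b - 1))"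
      by (simp only: pd1[OF i] pd2[OF i])
  qed
  also have "\<dots> = ?L * (real b * real (b - 1) * ?L ^ (b - 1 - 1)) + 2 * real b * ?L ^ (b - 1) * (\<Sum>i=1..m. \<nu> i)"
    by (simp add: sum.distrib Lplus_def sum_distrib_left sum_distrib_right mult_ac)
  finally show "Lminus \<nu> m (\<lambda>x. Lplus m x ^ b) x = real b * (real b - 1 + 2 * (\<Sum>i=1..m. \<nu> i)) * ?L ^ (b - 1)"
    unfolding real_mult_pow_pred_pred by (simp add: algebra_simps)
qed

lemma Lminus_Lplus_pow_mult:
  assumes H: "homogeneous m D H" and L0: "Lminus \<nu> m H = (\<lambda>x. 0)"
  shows "Lminus \<nu> m (\<lambda>x. Lplus m x ^ b * H x) =
    (\<lambda>x. real b * (real b - 1 + 2 * (\<Sum>i=1..m. \<nu> i) + 2 * D) * Lplus m x ^ (b - 1) * H x)"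
proof
  fix x
  have pH: "poly_fun H" using H by (simp add: homogeneous_def)
  have "(\<Sum>i=1..m. x i * pd i (\<lambda>x. Lplus m x ^ b) x * pd i H x)
      = (\<Sum>i=1..m. real b * Lplus m x ^ (b - 1) * (x i * pd i H x))"
    by (intro sum.cong refl) (simp add: pd_pow poly_fun_Lplus pd_Lplus)
  also have "\<dots> = real b * Lplus m x ^ (b - 1) * (D * H x)"
    using H by (simp add: homogeneous_def sum_distrib_left[symmetric])
  finally show "Lminus \<nu> m (\<lambda>x. Lplus m x ^ b * H x) x =
      real b * (real b - 1 + 2 * (\<Sum>i=1..m. \<nu> i) + 2 * D) * Lplus m x ^ (b - 1) * H x"
    unfolding Lminus_mult[OF poly_fun_pow[OF poly_fun_Lplus] pH] L0 Lminus_Lplus_pow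
    by (simp add: algebra_simps)
qed

definition Lminus_pow_coeff :: "nat \<Rightarrow> real \<Rightarrow> nat \<Rightarrow> real" where
  "Lminus_pow_coeff a \<gamma> i = (\<Prod>t<i. (real a - real t) * (real a - real t - 1 + \<gamma>))"

lemma Lminus_pow_coeff_eq_0: "a < i \<Longrightarrow> Lminus_pow_coeff a \<gamma> i = 0"
  unfolding Lminus_pow_coeff_def by (rule prod_zero) (auto intro!: bexI[of _ a])

lemma Lminus_iter_Lplus_pow_mult:
  assumes H: "homogeneous m D H" and L0: "Lminus \<nu> m H = (\<lambda>x. 0)"
  defines "\<gamma> \<equiv> 2 * (\<Sum>i=1..m. \<nu> i) + 2 * D"
  shows "(Lminus \<nu> m ^^ i) (\<lambda>x. Lplus m x ^ a * H x) =
    (\<lambda>x. Lminus_pow_coeff a \<gamma> i * (Lplus m x ^ (a - i) * H x))"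
proof (induction i)
  case 0
  then show ?case by (simp add: Lminus_pow_coeff_def)
next
  case (Suc i)
  have pH: "poly_fun H" using H by (simp add: homogeneous_def)
  have "(Lminus \<nu> m ^^ Suc i) (\<lambda>x. Lplus m x ^ a * H x)
      = (\<lambda>x. Lminus_pow_coeff a \<gamma> i * Lminus \<nu> m (\<lambda>x. Lplus m x ^ (a - i) * H x) x)"
    using Suc.IH by (simp add: Lminus_cmult poly_fun_mult poly_fun_pow poly_fun_Lplus pH)
  also have "\<dots> = (\<lambda>x. Lminus_pow_coeff a \<gamma> i * (real (a - i) * (real (a - i) - 1 + \<gamma>))
      * (Lplus m x ^ (a - Suc i) * H x))"
    unfolding Lminus_Lplus_pow_mult[OF H L0] \<gamma>_def by (simp add: algebra_simps)
  also have "\<dots> = (\<lambda>x. Lminus_pow_coeff a \<gamma> (Suc i) * (Lplus m x ^ (a - Suc i) * H x))"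
  proof (cases "i < a")
    case True
    then show ?thesis by (simp add: Lminus_pow_coeff_def of_nat_diff)
  next
    case False
    then show ?thesis by (simp add: Lminus_pow_coeff_eq_0)
  qed
  finally show ?case .
qed

lemma poly_fun_Lminus_iter: "poly_fun p \<Longrightarrow> poly_fun ((Lminus \<nu> m ^^ i) p)"
  by (induction i) (simp_all add: poly_fun_Lminus)

lemma coord_indep_Lminus_iter: "coord_indep k p \<Longrightarrow> k \<notin> {1..m} \<Longrightarrow> coord_indep k ((Lminus \<nu> m ^^ i) p)"
  by (induction i) (simp_all add: coord_indep_Lminus)

section \<open>Cauchy-Kovalevskaya extension\<close>

lemma Gamma_add_of_nat:
  assumes "(\<beta>::real) > 0"
  shows "Gamma (\<beta> + real n) = pochhammer \<beta> n * Gamma \<beta>"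
proof -
  have "\<beta> \<notin> \<int>\<^sub>\<le>\<^sub>0" "Gamma \<beta> > 0" using assms by auto
  then show ?thesis by (simp add: pochhammer_Gamma)
qed

(* The CK coefficient Gamma(beta) (-1)^i / (i! Gamma(i + beta)), using Gamma(i + beta) = (beta)_i Gamma(beta). *)
definition ck_coeff :: "real \<Rightarrow> nat \<Rightarrow> real" where
  "ck_coeff \<beta> i = (-1) ^ i / (fact i * pochhammer \<beta> i)"

lemma ck_coeff_Suc:
  assumes "\<beta> > 0"
  shows "ck_coeff \<beta> (Suc i) * (real (Suc i) * (real i + \<beta>)) = - ck_coeff \<beta> i"
proof -
  have "fact (Suc i) * pochhammer \<beta> (Suc i) = real (Suc i) * (real i + \<beta>) * (fact i * pochhammer \<beta> i)"
    by (simp add: pochhammer_rec' fact_Suc algebra_simps)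
  moreover have "real (Suc i) * (real i + \<beta>) \<noteq> 0"
    using assms by (simp add: add_pos_pos)
  ultimately show ?thesis
    unfolding ck_coeff_def by (simp del: of_nat_Suc)
qed

lemma CK_eq_sum:
  assumes p: "poly_fun p" and ind: "coord_indep (Suc m) p" and \<nu>: "\<nu> (Suc m) > 0"
  shows "CK \<nu> (Suc m) d p =
    (\<lambda>x. \<Sum>i\<le>d. ck_coeff (2 * \<nu> (Suc m)) i * (x (Suc m) ^ i * (Lminus \<nu> m ^^ i) p x))"
proof
  fix x
  define \<beta> where "\<beta> = 2 * \<nu> (Suc m)"
  have poly_neg_var: "poly_fun (\<lambda>x. - x (Suc m))"
    using poly_fun_cmult[OF poly_fun_var, of "-1" "Suc m"] by simp
  have iter: "((\<lambda>f y. - y (Suc m) * Lminus \<nu> m f y) ^^ i) p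
      = (\<lambda>x. (- x (Suc m)) ^ i * (Lminus \<nu> m ^^ i) p x)" for i
  proof (induction i)
    case (Suc i)
    have "Lminus \<nu> m (\<lambda>x. (- x (Suc m)) ^ i * (Lminus \<nu> m ^^ i) p x)
        = (\<lambda>x. (- x (Suc m)) ^ i * (Lminus \<nu> m ^^ Suc i) p x)"
      by (subst Lminus_mult_coord_indep)
        (auto intro: poly_fun_pow poly_neg_var poly_fun_Lminus_iter p simp: coord_indep_def)
    then show ?case using Suc.IH by (simp add: mult.assoc)
  qed simp
  have coeff: "Gamma \<beta> * ((- y) ^ i * g / (fact i * Gamma (real i + \<beta>))) = ck_coeff \<beta> i * (y ^ i * g)"
    for y g :: real and i
  proof -
    have "\<beta> > 0" using \<nu> by (simp add: \<beta>_def)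
    then have "Gamma (real i + \<beta>) = pochhammer \<beta> i * Gamma \<beta>" "Gamma \<beta> > 0" "pochhammer \<beta> i > 0"
      using Gamma_add_of_nat[of \<beta> i] by (simp_all add: add.commute pochhammer_pos)
    then show ?thesis
      unfolding ck_coeff_def power_minus[of y] by (simp add: field_simps)
  qed
  have "CK \<nu> (Suc m) d p x = (\<Sum>i\<le>d. Gamma \<beta> *
      (((\<lambda>f y. - y (Suc m) * Lminus \<nu> m f y) ^^ i) p x / (fact i * Gamma (real i + \<beta>))))"
    by (simp add: CK_def \<beta>_def atLeast0AtMost sum_distrib_left)
  also have "\<dots> = (\<Sum>i\<le>d. ck_coeff \<beta> i * (x (Suc m) ^ i * (Lminus \<nu> m ^^ i) p x))"
    unfolding iter by (intro sum.cong refl coeff)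
  finally show "CK \<nu> (Suc m) d p x =
      (\<Sum>i\<le>d. ck_coeff (2 * \<nu> (Suc m)) i * (x (Suc m) ^ i * (Lminus \<nu> m ^^ i) p x))"
    by (simp add: \<beta>_def)
qed

lemma Lminus_Suc_pow_mult:
  assumes g: "poly_fun g" and ind: "coord_indep (Suc m) g"
  shows "Lminus \<nu> (Suc m) (\<lambda>x. x (Suc m) ^ i * g x) =
    (\<lambda>x. x (Suc m) ^ i * Lminus \<nu> m g x + real i * (real i - 1 + 2 * \<nu> (Suc m)) * x (Suc m) ^ (i - 1) * g x)"
proof -
  have pd1: "pd (Suc m) (\<lambda>x. x (Suc m) ^ i * g x) = (\<lambda>x. real i * x (Suc m) ^ (i - 1) * g x)"
    using g by (simp add: pd_mult pd_pow pd_var poly_fun_pow poly_fun_var pd_eq_0_if_coord_indep[OF ind])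
  have pd2: "pd (Suc m) (\<lambda>x. real i * x (Suc m) ^ (i - 1) * g x)
      = (\<lambda>x. real i * real (i - 1) * x (Suc m) ^ (i - 1 - 1) * g x)"
    using g by (simp add: pd_mult pd_pow pd_var pd_const poly_fun_mult poly_fun_pow poly_fun_var
        poly_fun_const pd_eq_0_if_coord_indep[OF ind] mult.assoc)
  have "Lminus \<nu> m (\<lambda>x. x (Suc m) ^ i * g x) = (\<lambda>x. x (Suc m) ^ i * Lminus \<nu> m g x)"
    using g by (intro Lminus_mult_coord_indep poly_fun_pow poly_fun_var) (auto simp: coord_indep_def)
  moreover have "y * (real i * real (i - 1) * y ^ (i - 1 - 1) * h) + 2 * \<nu> (Suc m) * (real i * y ^ (i - 1) * h)
      = real i * (real i - 1 + 2 * \<nu> (Suc m)) * y ^ (i - 1) * h" for y h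
  proof -
    have "y * (real i * real (i - 1) * y ^ (i - 1 - 1) * h) = (y * (real i * real (i - 1) * y ^ (i - 1 - 1))) * h"
      by (simp only: mult.assoc)
    then show ?thesis unfolding real_mult_pow_pred_pred by (simp add: algebra_simps)
  qed
  ultimately show ?thesis
    unfolding Lminus_Suc pd1 pd2 by simp
qed

lemma sum_atMost_shift_cancel:
  fixes A B :: "nat \<Rightarrow> 'a::ab_group_add"
  assumes "B 0 = 0" "\<And>i. B (Suc i) = - A i" "A d = 0"
  shows "(\<Sum>i\<le>d. A i + B i) = 0"
proof -
  have "(\<Sum>i\<le>d. B i) = (\<Sum>i<Suc d. B i)"
    by (simp only: lessThan_Suc_atMost)
  also have "\<dots> = - (\<Sum>i<d. A i)"
    unfolding sum.lessThan_Suc_shift using assms(1,2) by (simp add: sum_negf)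
  finally have "(\<Sum>i\<le>d. B i) = - (\<Sum>i<d. A i)" .
  moreover have "(\<Sum>i\<le>d. A i) = (\<Sum>i<d. A i)"
    using assms(3) by (simp add: lessThan_Suc_atMost[symmetric])
  ultimately show ?thesis by (simp add: sum.distrib)
qed

(* The x_(m+1)-part of L_-^[m+1] sends the i-th term of the CK series to minus the image of the
   (i-1)-st term under L_-^[m]; the series telescopes, and its last term vanishes by nilpotency. *)
lemma Lminus_CK_eq_0:
  assumes p: "poly_fun p" and ind: "coord_indep (Suc m) p" and \<nu>: "\<nu> (Suc m) > 0"
    and vanish: "(Lminus \<nu> m ^^ Suc d) p = (\<lambda>x. 0)"
  shows "Lminus \<nu> (Suc m) (CK \<nu> (Suc m) d p) = (\<lambda>x. 0)"
proof
  fix x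
  define \<beta> where "\<beta> = 2 * \<nu> (Suc m)"
  define g where "g i = (Lminus \<nu> m ^^ i) p" for i
  have g_poly: "poly_fun (g i)" for i
    unfolding g_def by (rule poly_fun_Lminus_iter[OF p])
  have g_ind: "coord_indep (Suc m) (g i)" for i
    unfolding g_def by (rule coord_indep_Lminus_iter[OF ind]) simp
  have g_Suc: "Lminus \<nu> m (g i) = g (Suc i)" for i
    by (simp add: g_def)
  have "Lminus \<nu> (Suc m) (CK \<nu> (Suc m) d p) x
      = (\<Sum>i\<le>d. ck_coeff \<beta> i * Lminus \<nu> (Suc m) (\<lambda>x. x (Suc m) ^ i * g i x) x)"
    unfolding CK_eq_sum[where \<nu> = \<nu> and m = m, OF p ind \<nu>] g_def[symmetric] \<beta>_def[symmetric]
    by (simp add: Lminus_sum Lminus_cmult poly_fun_cmult poly_fun_mult poly_fun_pow poly_fun_var g_poly)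
  also have "\<dots> = (\<Sum>i\<le>d. ck_coeff \<beta> i * (x (Suc m) ^ i * g (Suc i) x)
      + ck_coeff \<beta> i * (real i * (real i - 1 + \<beta>) * x (Suc m) ^ (i - 1) * g i x))"
    unfolding Lminus_Suc_pow_mult[OF g_poly g_ind] g_Suc \<beta>_def by (simp add: distrib_left)
  also have "\<dots> = 0"
  proof (rule sum_atMost_shift_cancel)
    fix i
    show "ck_coeff \<beta> (Suc i) * (real (Suc i) * (real (Suc i) - 1 + \<beta>) * x (Suc m) ^ (Suc i - 1) * g (Suc i) x)
        = - (ck_coeff \<beta> i * (x (Suc m) ^ i * g (Suc i) x))"
      using ck_coeff_Suc[of \<beta> i] \<nu> unfolding \<beta>_def by (simp add: mult.assoc[symmetric])
  next
    show "ck_coeff \<beta> d * (x (Suc m) ^ d * g (Suc d) x) = 0"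
      using vanish by (simp add: g_def)
  qed simp
  finally show "Lminus \<nu> (Suc m) (CK \<nu> (Suc m) d p) x = 0" .
qed

lemma coord_indep_CK:
  assumes "coord_indep k p" "m < k"
  shows "coord_indep k (CK \<nu> m d p)"
proof -
  have "coord_indep k (((\<lambda>f y. - y m * Lminus \<nu> (m - 1) f y) ^^ i) p)" for i
  proof (induction i)
    case (Suc i)
    then have "coord_indep k (Lminus \<nu> (m - 1) (((\<lambda>f y. - y m * Lminus \<nu> (m - 1) f y) ^^ i) p))"
      using assms(2) by (intro coord_indep_Lminus) auto
    then show ?case using assms(2) by (simp add: coord_indep_def)
  qed (simp add: assms(1))
  then show ?thesis unfolding CK_def coord_indep_def by simp
qed

section \<open>The CK extension of a power of \<open>L_+\<close> times a null solution\<close>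

lemma ck_coeff_mult_Lminus_pow_coeff:
  assumes "\<beta> > 0" and "s \<le> a"
  shows "ck_coeff \<beta> s * Lminus_pow_coeff a \<gamma> s * y ^ s * L ^ (a - s) =
    (-1) ^ a * fact a / pochhammer \<beta> a *
    ((real a + (\<gamma> - 1)) gchoose s) * ((real a + (\<beta> - 1)) gchoose (a - s)) * (- L) ^ (a - s) * y ^ s"
proof -
  define r where "r = a - s"
  have a: "a = s + r" using assms(2) by (simp add: r_def)
  have "(\<Prod>t<s. real a - real t) = fact s * real (a choose s)"
    by (simp add: binomial_gbinomial gbinomial_mult_fact atLeast0LessThan)
  also have "\<dots> = fact a / fact r"
    using assms(2) by (simp add: binomial_fact r_def)
  finally have falling: "(\<Prod>t<s. real a - real t) = fact a / fact r" .
  have rising: "(\<Prod>t<s. real a - real t - 1 + \<gamma>) = fact s * ((real a + (\<gamma> - 1)) gchoose s)"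
    by (simp add: gbinomial_mult_fact atLeast0LessThan algebra_simps)
  have coeff: "Lminus_pow_coeff a \<gamma> s = fact a / fact r * (fact s * ((real a + (\<gamma> - 1)) gchoose s))"
    unfolding Lminus_pow_coeff_def prod.distrib falling rising ..
  have gchoose: "(real a + (\<beta> - 1)) gchoose r = pochhammer (\<beta> + real s) r / fact r"
    by (simp add: gbinomial_pochhammer' a algebra_simps)
  have split: "pochhammer \<beta> a = pochhammer \<beta> s * pochhammer (\<beta> + real s) r"
    unfolding a by (rule pochhammer_product')
  have pos: "pochhammer \<beta> s > 0" "pochhammer (\<beta> + real s) r > 0"
    using assms(1) by (simp_all add: pochhammer_pos)
  have "(-1::real) ^ r * (-1) ^ r = 1"
    by (simp flip: power_mult_distrib)
  then have sign: "(-1::real) ^ a * (-1) ^ r = (-1) ^ s"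
    unfolding a power_add by (simp add: mult.assoc)
  show ?thesis
    unfolding ck_coeff_def coeff gchoose split r_def[symmetric]
    using pos sign by (simp add: field_simps power_minus[of L])
qed

lemma ck_sum_eq_jacobiHom:
  assumes "\<beta> > 0"
  shows "(\<Sum>i\<le>a. ck_coeff \<beta> i * Lminus_pow_coeff a \<gamma> i * y ^ i * L ^ (a - i)) =
    (-1) ^ a * fact a / pochhammer \<beta> a * jacobiHom a (\<gamma> - 1) (\<beta> - 1) (y - L) (L + y)"
proof -
  have "((y - L) - (L + y)) / 2 = - L" "((y - L) + (L + y)) / 2 = y" by auto
  then show ?thesis
    unfolding jacobiHom_def sum_distrib_left atLeast0AtMost
    by (intro sum.cong refl, subst ck_coeff_mult_Lminus_pow_coeff[OF assms]) (simp_all add: mult.assoc)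
qed

lemma homogeneous_jacobiHom:
  assumes u: "homogeneous m 1 u" and v: "homogeneous m 1 v"
  shows "homogeneous m (real a) (\<lambda>x. jacobiHom a \<alpha> \<beta> (u x) (v x))"
  unfolding jacobiHom_def
proof (intro homogeneous_sum)
  fix s assume s: "s \<in> {0..a}"
  have diff: "homogeneous m 1 (\<lambda>x. (u x - v x) / 2)"
    using homogeneous_cmult[OF homogeneous_diff[OF u v], of "1 / 2"] by simp
  have sum: "homogeneous m 1 (\<lambda>x. (u x + v x) / 2)"
    using homogeneous_cmult[OF homogeneous_add[OF u v], of "1 / 2"] by simp
  have "homogeneous m (real (a - s) * 1 + real s * 1) (\<lambda>x. ((real a + \<alpha>) gchoose s) * ((real a + \<beta>) gchoose (a - s))
      * ((u x - v x) / 2) ^ (a - s) * ((u x + v x) / 2) ^ s)"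
    by (intro homogeneous_mult homogeneous_cmult homogeneous_pow diff sum)
  then show "homogeneous m (real a) (\<lambda>x. ((real a + \<alpha>) gchoose s) * ((real a + \<beta>) gchoose (a - s))
      * ((u x - v x) / 2) ^ (a - s) * ((u x + v x) / 2) ^ s)"
    using s by simp
qed simp

definition null_solution :: "(nat \<Rightarrow> real) \<Rightarrow> nat \<Rightarrow> real \<Rightarrow> ((nat \<Rightarrow> real) \<Rightarrow> real) \<Rightarrow> bool" where
  "null_solution \<nu> m D H \<longleftrightarrow> homogeneous m D H \<and> Lminus \<nu> m H = (\<lambda>x. 0) \<and> (\<forall>k>m. coord_indep k H)"

lemma null_solution_one: "null_solution \<nu> m 0 (\<lambda>x. 1)"
  by (simp add: null_solution_def homogeneous_const Lminus_def pd_const coord_indep_def)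

lemma CK_Lplus_pow_mult:
  assumes H: "null_solution \<nu> m D H" and \<nu>: "\<nu> (Suc m) > 0" and "a \<le> d"
  shows "CK \<nu> (Suc m) d (\<lambda>x. Lplus m x ^ a * H x) =
    (\<lambda>x. H x * ((-1) ^ a * fact a / pochhammer (2 * \<nu> (Suc m)) a *
      jacobiHom a (2 * (\<Sum>i=1..m. \<nu> i) + 2 * D - 1) (2 * \<nu> (Suc m) - 1)
        (x (Suc m) - Lplus m x) (Lplus (Suc m) x)))"
proof
  fix x
  define \<beta> where "\<beta> = 2 * \<nu> (Suc m)"
  define \<gamma> where "\<gamma> = 2 * (\<Sum>i=1..m. \<nu> i) + 2 * D"
  have hom: "homogeneous m D H" and L0: "Lminus \<nu> m H = (\<lambda>x. 0)" and ind: "\<forall>k>m. coord_indep k H"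
    using H by (simp_all add: null_solution_def)
  have p: "poly_fun (\<lambda>x. Lplus m x ^ a * H x)"
    using hom by (simp add: homogeneous_def poly_fun_mult poly_fun_pow poly_fun_Lplus)
  have p_ind: "coord_indep (Suc m) (\<lambda>x. Lplus m x ^ a * H x)"
    using ind by (simp add: coord_indep_Lplus_pow_mult)
  have "CK \<nu> (Suc m) d (\<lambda>x. Lplus m x ^ a * H x) x
      = (\<Sum>i\<le>d. ck_coeff \<beta> i * (x (Suc m) ^ i * (Lminus_pow_coeff a \<gamma> i * (Lplus m x ^ (a - i) * H x))))"
    unfolding CK_eq_sum[where \<nu> = \<nu> and m = m, OF p p_ind \<nu>] Lminus_iter_Lplus_pow_mult[OF hom L0]
      \<beta>_def \<gamma>_def ..
  also have "\<dots> = (\<Sum>i\<le>a. ck_coeff \<beta> i * (x (Suc m) ^ i * (Lminus_pow_coeff a \<gamma> i * (Lplus m x ^ (a - i) * H x))))"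
    using \<open>a \<le> d\<close> by (intro sum.mono_neutral_right) (auto simp: Lminus_pow_coeff_eq_0)
  also have "\<dots> = H x * (\<Sum>i\<le>a. ck_coeff \<beta> i * Lminus_pow_coeff a \<gamma> i * x (Suc m) ^ i * Lplus m x ^ (a - i))"
    by (simp add: sum_distrib_left mult_ac)
  also have "\<dots> = H x * ((-1) ^ a * fact a / pochhammer \<beta> a *
      jacobiHom a (\<gamma> - 1) (\<beta> - 1) (x (Suc m) - Lplus m x) (Lplus (Suc m) x))"
    using \<nu> by (simp add: ck_sum_eq_jacobiHom \<beta>_def Lplus_def)
  finally show "CK \<nu> (Suc m) d (\<lambda>x. Lplus m x ^ a * H x) x = H x * ((-1) ^ a * fact a / pochhammer (2 * \<nu> (Suc m)) a *
      jacobiHom a (2 * (\<Sum>i=1..m. \<nu> i) + 2 * D - 1) (2 * \<nu> (Suc m) - 1)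
        (x (Suc m) - Lplus m x) (Lplus (Suc m) x))"
    by (simp add: \<beta>_def \<gamma>_def)
qed

lemma null_solution_CK:
  assumes H: "null_solution \<nu> m D H" and \<nu>: "\<nu> (Suc m) > 0" and "a \<le> d"
  shows "null_solution \<nu> (Suc m) (D + real a) (CK \<nu> (Suc m) d (\<lambda>x. Lplus m x ^ a * H x))"
proof -
  have hom: "homogeneous m D H" and L0: "Lminus \<nu> m H = (\<lambda>x. 0)" and ind: "\<forall>k>m. coord_indep k H"
    using H by (simp_all add: null_solution_def)
  have p: "poly_fun (\<lambda>x. Lplus m x ^ a * H x)"
    using hom by (simp add: homogeneous_def poly_fun_mult poly_fun_pow poly_fun_Lplus)
  have p_ind: "coord_indep k (\<lambda>x. Lplus m x ^ a * H x)" if "m < k" for k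
    using ind that by (simp add: coord_indep_Lplus_pow_mult)
  have "homogeneous (Suc m) 1 (\<lambda>x. x (Suc m) - Lplus m x)"
    by (intro homogeneous_diff homogeneous_var homogeneous_Suc homogeneous_Lplus coord_indep_Lplus) auto
  then have "homogeneous (Suc m) (real a) (\<lambda>x. jacobiHom a (2 * (\<Sum>i=1..m. \<nu> i) + 2 * D - 1)
      (2 * \<nu> (Suc m) - 1) (x (Suc m) - Lplus m x) (Lplus (Suc m) x))"
    by (rule homogeneous_jacobiHom[OF _ homogeneous_Lplus])
  then have "homogeneous (Suc m) (D + real a) (CK \<nu> (Suc m) d (\<lambda>x. Lplus m x ^ a * H x))"
    unfolding CK_Lplus_pow_mult[OF assms]
    using ind by (intro homogeneous_mult homogeneous_cmult homogeneous_Suc[OF hom]) auto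
  moreover have vanish: "(Lminus \<nu> m ^^ Suc d) (\<lambda>x. Lplus m x ^ a * H x) = (\<lambda>x. 0)"
    unfolding Lminus_iter_Lplus_pow_mult[OF hom L0] using \<open>a \<le> d\<close> by (simp add: Lminus_pow_coeff_eq_0)
  ultimately show ?thesis
    unfolding null_solution_def
    using Lminus_CK_eq_0[where \<nu> = \<nu> and m = m, OF p p_ind[OF lessI] \<nu> vanish] coord_indep_CK[OF p_ind] by auto
qed

lemma null_solution_psiAux:
  assumes "\<forall>i\<in>{1..Suc k}. \<nu> i > 0"
  shows "null_solution \<nu> (Suc k) (real (\<Sum>l=1..k. j l)) (psiAux \<nu> j k)"
  using assms
proof (induction k)
  case 0
  then show ?case by (simp add: null_solution_one)
next
  case (Suc k)
  have "j (Suc k) \<le> (\<Sum>l=1..Suc k. j l)"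
    by (rule member_le_sum) auto
  then have "null_solution \<nu> (Suc (Suc k)) (real (\<Sum>l=1..k. j l) + real (j (Suc k)))
      (CK \<nu> (Suc (Suc k)) (\<Sum>l=1..Suc k. j l) (\<lambda>x. Lplus (Suc k) x ^ j (Suc k) * psiAux \<nu> j k x))"
    using Suc by (intro null_solution_CK) auto
  then show ?case by simp
qed

definition jacobi_factor :: "(nat \<Rightarrow> real) \<Rightarrow> (nat \<Rightarrow> nat) \<Rightarrow> nat \<Rightarrow> (nat \<Rightarrow> real) \<Rightarrow> real" where
  "jacobi_factor \<nu> j k x = (-1) ^ j k * fact (j k) * Gamma (2 * \<nu> (k + 1)) / Gamma (2 * \<nu> (k + 1) + real (j k))
     * jacobiHom (j k) (alphaBG \<nu> j k) (2 * \<nu> (k + 1) - 1) (x (k + 1) - Lplus k x) (Lplus (k + 1) x)"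

lemma psiAux_eq_prod_jacobi_factor:
  assumes "\<forall>i\<in>{1..Suc k}. \<nu> i > 0"
  shows "psiAux \<nu> j k = (\<lambda>x. \<Prod>l=1..k. jacobi_factor \<nu> j l x)"
  using assms
proof (induction k)
  case (Suc k)
  define \<beta> where "\<beta> = 2 * \<nu> (Suc (Suc k))"
  have \<beta>: "\<beta> > 0" using Suc.prems by (simp add: \<beta>_def)
  have null: "null_solution \<nu> (Suc k) (real (\<Sum>l=1..k. j l)) (psiAux \<nu> j k)"
    using Suc.prems by (intro null_solution_psiAux) auto
  have "j (Suc k) \<le> (\<Sum>l=1..Suc k. j l)"
    by (rule member_le_sum) auto
  then have "psiAux \<nu> j (Suc k) = (\<lambda>x. psiAux \<nu> j k x * ((-1) ^ j (Suc k) * fact (j (Suc k)) / pochhammer \<beta> (j (Suc k)) *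
      jacobiHom (j (Suc k)) (alphaBG \<nu> j (Suc k)) (\<beta> - 1) (x (Suc (Suc k)) - Lplus (Suc k) x) (Lplus (Suc (Suc k)) x)))"
    using CK_Lplus_pow_mult[OF null, of "j (Suc k)"] Suc.prems
    by (simp add: \<beta>_def alphaBG_def of_nat_sum algebra_simps)
  also have "\<dots> = (\<lambda>x. psiAux \<nu> j k x * jacobi_factor \<nu> j (Suc k) x)"
    using Gamma_add_of_nat[OF \<beta>, of "j (Suc k)"] Gamma_real_pos[OF \<beta>]
    by (simp add: jacobi_factor_def \<beta>_def)
  finally show ?case
    using Suc by (simp add: prod.cl_ivl_Suc)
qed simp

theorem mainTheorem6:
  fixes n :: nat and \<nu> :: "nat \<Rightarrow> real" and j :: "nat \<Rightarrow> nat"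
  assumes "n \<ge> 2" and "\<forall>i\<in>{1..n}. \<nu> i > 0"
  shows "psiBG \<nu> j n =
    (\<lambda>x. \<Prod>k=1..n-1. (-1) ^ j k * fact (j k) * Gamma (2 * \<nu> (k + 1)) / Gamma (2 * \<nu> (k + 1) + real (j k))
        * jacobiHom (j k) (alphaBG \<nu> j k) (2 * \<nu> (k + 1) - 1) (x (k + 1) - Lplus k x) (Lplus (k + 1) x))"
proof -
  have "Suc (n - 1) = n" using assms(1) by simp
  then have "psiAux \<nu> j (n - 1) = (\<lambda>x. \<Prod>k=1..n-1. jacobi_factor \<nu> j k x)"
    using psiAux_eq_prod_jacobi_factor[of "n - 1" \<nu> j] assms(2) by simp
  then show ?thesis
    unfolding psiBG_def jacobi_factor_def .
qed

end
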